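(* Let $S$ be a numerical semigroup. For every $s\in S$ with $\mathfrak d(s)\ge2$ there exists $d\in\mathcal E(S)$ with $d\le_S s$.
   Context: A numerical semigroup $S$ is a submonoid of $(\mathbb N,+)$ with finite complement, with minimal generating set $A=\{n_1,\dots,n_e\}$. The cyclotomic exponent sequence is the unique integer sequence $(e_j)_{j\ge1}$ with $(1-x)\sum_{s\in S}x^s=\prod_{j\ge1}(1-x^j)^{e_j}$ in $\mathbb Z[[x]]$; $\mathcal E(S)=\{d\in\mathbb N: d\ge2,\ e_d\ne0,\ d\notin A\}$. Write $a\le_S b$ if $b-a\in S$. With $\varphi:\mathbb N^e\to S$, $\varphi(a)=\sum_ia_in_i$, $\mathfrak d(s)=|\varphi^{-1}(s)|$ is the number of factorizations of $s$. *)

theory Defs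
  imports "HOL-Computational_Algebra.Formal_Power_Series"
begin

definition numerical_semigroup :: "nat set \<Rightarrow> bool" where
  "numerical_semigroup S \<longleftrightarrow> 0 \<in> S \<and> (\<forall>a\<in>S. \<forall>b\<in>S. a + b \<in> S) \<and> finite (UNIV - S)"

definition min_gens :: "nat set \<Rightarrow> nat set" where
  "min_gens S = {n \<in> S. n \<noteq> 0 \<and> \<not> (\<exists>a\<in>S. \<exists>b\<in>S. a \<noteq> 0 \<and> b \<noteq> 0 \<and> n = a + b)}"

definition sg_series :: "nat set \<Rightarrow> rat fps" where
  "sg_series S = Abs_fps (\<lambda>n. if n \<in> S then 1 else 0)"

definition is_cyc_exp_seq :: "nat set \<Rightarrow> (nat \<Rightarrow> int) \<Rightarrow> bool" where
  "is_cyc_exp_seq S e \<longleftrightarrow>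
     (\<lambda>n. \<Prod>j\<in>{1..n}. (1 - fps_X ^ j) powi (e j)) \<longlonglongrightarrow> (1 - fps_X) * sg_series S"

definition cyc_exp :: "nat set \<Rightarrow> nat \<Rightarrow> int" where
  "cyc_exp S = (THE e. is_cyc_exp_seq S e \<and> e 0 = 0)"

definition cycE :: "nat set \<Rightarrow> nat set" where
  "cycE S = {d. d \<ge> 2 \<and> cyc_exp S d \<noteq> 0 \<and> d \<notin> min_gens S}"

definition factorizations :: "nat set \<Rightarrow> nat \<Rightarrow> (nat \<Rightarrow> nat) set" where
  "factorizations S s = {f. (\<forall>a. a \<notin> min_gens S \<longrightarrow> f a = 0) \<and> (\<Sum>a\<in>min_gens S. f a * a) = s}"

definition nfact :: "nat set \<Rightarrow> nat \<Rightarrow> nat" where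
  "nfact S s = card (factorizations S s)"

definition sg_le :: "nat set \<Rightarrow> nat \<Rightarrow> nat \<Rightarrow> bool" where
  "sg_le S a b \<longleftrightarrow> a \<le> b \<and> b - a \<in> S"

end

(*
  Let H be the semigroup series of S and e its exponent sequence (the cyclotomic exponents with
  the factor 1 - x removed). As H is supported on S, e vanishes off S. Coefficients at the
  S-divisors j <=_S s of s only involve coefficients at smaller S-divisors when a series is
  multiplied by one supported on S; so, modulo these coefficients, every factor (1 - x^j)^(e_j)
  of index j not dividing s may be dropped. Applied to s = a this shows e_a = -1 at each minimal
  generator a. If no element of E(S) divides s, every remaining exponent is -1 at a generator
  and 0 otherwise, so the coefficient 1 of x^s in H is the coefficient of x^s in
  prod_a 1/(1 - x^a), which counts the factorizations of s.
*)

theory Submission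
  imports Defs
begin

unbundle fps_syntax

section \<open>Cyclotomic products\<close>

lemma fps_inverse_nth_rec:
  assumes "f $ 0 = (1::'a::field)" and "n > 0"
  shows "inverse f $ n = - (\<Sum>j<n. inverse f $ j * f $ (n - j))"
proof -
  have "0 = (inverse f * f) $ n"
    using assms by (simp add: inverse_mult_eq_1)
  also have "\<dots> = (\<Sum>j\<in>insert n {..<n}. inverse f $ j * f $ (n - j))"
    unfolding fps_mult_nth by (rule sum.cong) auto
  also have "\<dots> = inverse f $ n + (\<Sum>j<n. inverse f $ j * f $ (n - j))"
    using assms(1) by simp
  finally show ?thesis by (simp add: eq_neg_iff_add_eq_0)
qed

definition fps_near1 :: "nat \<Rightarrow> int \<Rightarrow> 'a::field fps \<Rightarrow> bool" where
  "fps_near1 k c f \<longleftrightarrow> f $ 0 = 1 \<and> (\<forall>i. 0 < i \<and> i < k \<longrightarrow> f $ i = 0) \<and> f $ k = - of_int c"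

lemma mult_fps_near1_nth:
  assumes k: "k \<ge> 1" and f: "fps_near1 k c f" and i: "i \<le> k"
  shows "(g * f) $ i = g $ i + (if i = k then g $ 0 * f $ k else 0)"
proof -
  have "g $ j * f $ (i - j) =
      (if j = i then g $ i else 0) + (if j = 0 \<and> i = k then g $ 0 * f $ k else 0)"
    if "j \<le> i" for j
    using f k i that unfolding fps_near1_def
    by (cases "j = i"; cases "i - j < k") auto
  then have "(g * f) $ i =
      (\<Sum>j=0..i. (if j = i then g $ i else 0) + (if j = 0 \<and> i = k then g $ 0 * f $ k else 0))"
    unfolding fps_mult_nth by (intro sum.cong) auto
  then show ?thesis by (simp add: sum.distrib)
qed

lemma mult_fps_near1_nth_less:
  "k \<ge> 1 \<Longrightarrow> fps_near1 k c f \<Longrightarrow> i < k \<Longrightarrow> (g * f) $ i = g $ i"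
  using mult_fps_near1_nth[of k c f i g] by simp

lemma mult_fps_near1_nth_eq:
  "k \<ge> 1 \<Longrightarrow> fps_near1 k c f \<Longrightarrow> (g * f) $ k = g $ k - of_int c * g $ 0"
  using mult_fps_near1_nth[of k c f k g] by (simp add: fps_near1_def)

lemma fps_near1_mult:
  assumes "k \<ge> 1" "fps_near1 k c f" "fps_near1 k d g"
  shows "fps_near1 k (c + d) (f * g)"
  using mult_fps_near1_nth_less[OF assms(1,3), of _ f] mult_fps_near1_nth_eq[OF assms(1,3), of f] assms(2,3)
  unfolding fps_near1_def by (auto simp: algebra_simps)

lemma fps_near1_power:
  assumes k: "k \<ge> 1" and f: "fps_near1 k c f"
  shows "fps_near1 k (int n * c) (f ^ n)"
proof (induction n)
  case 0
  show ?case using k by (simp add: fps_near1_def)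
next
  case (Suc n)
  from fps_near1_mult[OF k f Suc] show ?case by (simp add: algebra_simps)
qed

lemma fps_near1_inverse:
  assumes k: "k \<ge> 1" and f: "fps_near1 k c f"
  shows "fps_near1 k (- c) (inverse f)"
proof -
  have f0: "f $ 0 = 1" using f by (simp add: fps_near1_def)
  have inv: "inverse f * f = 1" using f0 by (intro inverse_mult_eq_1) simp
  have "inverse f $ i = 0" if "0 < i" "i < k" for i
    using mult_fps_near1_nth_less[OF k f that(2), of "inverse f"] inv that(1) by simp
  moreover have "inverse f $ k = of_int c"
    using mult_fps_near1_nth_eq[OF k f, of "inverse f"] inv f0 k by simp
  ultimately show ?thesis using f0 by (simp add: fps_near1_def)
qed

definition cyc_factor :: "nat \<Rightarrow> int \<Rightarrow> 'a::field fps" where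
  "cyc_factor j c = (1 - fps_X ^ j) powi c"

lemma fps_near1_cyc_factor:
  assumes k: "k \<ge> 1"
  shows "fps_near1 k c (cyc_factor k c)"
proof -
  have base: "fps_near1 k 1 (1 - fps_X ^ k :: 'a fps)"
    using k by (simp add: fps_near1_def)
  show ?thesis
  proof (cases "c \<ge> 0")
    case True
    then show ?thesis
      using fps_near1_power[OF k base, of "nat c"] by (simp add: cyc_factor_def power_int_def)
  next
    case False
    then show ?thesis
      using fps_near1_power[OF k fps_near1_inverse[OF k base], of "nat (- c)"]
      by (simp add: cyc_factor_def power_int_def)
  qed
qed

lemma cyc_factor_nth_0: "j \<ge> 1 \<Longrightarrow> (cyc_factor j c :: 'a::field fps) $ 0 = 1"
  using fps_near1_cyc_factor[of j c] unfolding fps_near1_def by blast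

lemma cyc_factor_nth_self: "j \<ge> 1 \<Longrightarrow> (cyc_factor j c :: 'a::field fps) $ j = - of_int c"
  using fps_near1_cyc_factor[of j c] unfolding fps_near1_def by blast

lemma cyc_factor_0 [simp]: "cyc_factor j 0 = 1"
  by (simp add: cyc_factor_def)

lemma cyc_factor_minus_1: "cyc_factor j (- 1) = inverse (1 - fps_X ^ j)"
  by (simp add: cyc_factor_def power_int_def)

lemma cyc_factor_eq_mult_pred:
  assumes j: "j \<ge> 1"
  shows "cyc_factor j c = (1 - fps_X ^ j) * cyc_factor j (c - 1)"
proof -
  have unit: "(1 - fps_X ^ j) * inverse (1 - fps_X ^ j) = (1 :: 'a fps)"
    using j by (intro inverse_mult_eq_1') simp
  show ?thesis
  proof (cases "c \<ge> 1")
    case True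
    then have "nat c = Suc (nat (c - 1))" by simp
    with True show ?thesis by (simp add: cyc_factor_def power_int_def)
  next
    case False
    then have "nat (1 - c) = Suc (nat (- c))" by simp
    with False show ?thesis
      by (simp add: cyc_factor_def power_int_def mult.assoc[symmetric] unit)
  qed
qed

definition cyc_prod :: "(nat \<Rightarrow> int) \<Rightarrow> nat \<Rightarrow> 'a::field fps" where
  "cyc_prod e n = (\<Prod>j\<in>{1..n}. cyc_factor j (e j))"

lemma cyc_prod_0 [simp]: "cyc_prod e 0 = 1"
  by (simp add: cyc_prod_def)

lemma cyc_prod_Suc: "cyc_prod e (Suc n) = cyc_prod e n * cyc_factor (Suc n) (e (Suc n))"
  by (simp add: cyc_prod_def atLeastAtMostSuc_conv mult.commute)

lemma cyc_prod_cong: "(\<And>j. 1 \<le> j \<Longrightarrow> j \<le> n \<Longrightarrow> e j = e' j) \<Longrightarrow> cyc_prod e n = cyc_prod e' n"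
  unfolding cyc_prod_def by (rule prod.cong) auto

lemma cyc_prod_eq_prod:
  assumes "J \<subseteq> {1..n}" and "\<And>j. 1 \<le> j \<Longrightarrow> j \<le> n \<Longrightarrow> j \<notin> J \<Longrightarrow> e j = 0"
  shows "cyc_prod e n = (\<Prod>j\<in>J. cyc_factor j (e j))"
  unfolding cyc_prod_def using assms by (intro prod.mono_neutral_right) auto

lemma cyc_prod_nth_0 [simp]: "cyc_prod e n $ 0 = 1"
  by (induction n) (simp_all add: cyc_prod_Suc cyc_factor_nth_0)

lemma cyc_prod_nth_stable:
  assumes "i \<le> n" and "n \<le> m"
  shows "cyc_prod e m $ i = cyc_prod e n $ i"
  using assms(2)
proof (induction m rule: dec_induct)
  case base
  show ?case ..
next
  case (step m)
  then show ?case
    using assms(1) by (simp add: cyc_prod_Suc mult_fps_near1_nth_less[OF _ fps_near1_cyc_factor])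
qed

lemma cyc_prod_nth_Suc:
  "cyc_prod e (Suc n) $ Suc n = cyc_prod e n $ Suc n - of_int (e (Suc n))"
  by (simp add: cyc_prod_Suc mult_fps_near1_nth_eq[OF _ fps_near1_cyc_factor])

section \<open>Exponent sequences\<close>

definition cyc_exponents :: "(nat \<Rightarrow> int) \<Rightarrow> 'a::field fps \<Rightarrow> bool" where
  "cyc_exponents e G \<longleftrightarrow> (\<forall>k. cyc_prod e k $ k = G $ k)"

lemma cyc_exponents_iff_tendsto:
  fixes G :: "'a::field fps"
  shows "cyc_exponents e G \<longleftrightarrow> (\<lambda>n. cyc_prod e n) \<longlonglongrightarrow> G"
proof
  assume exps: "cyc_exponents e G"
  have "cyc_prod e n $ k = G $ k" if "n \<ge> k" for n k
  proof -
    have "(cyc_prod e n :: 'a fps) $ k = cyc_prod e k $ k"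
      using that by (rule cyc_prod_nth_stable[OF order.refl])
    then show ?thesis using exps by (simp add: cyc_exponents_def)
  qed
  then show "(\<lambda>n. cyc_prod e n) \<longlonglongrightarrow> G"
    unfolding tendsto_fps_iff eventually_sequentially by blast
next
  assume lim: "(\<lambda>n. cyc_prod e n) \<longlonglongrightarrow> G"
  show "cyc_exponents e G"
    unfolding cyc_exponents_def
  proof
    fix k
    obtain N where N: "\<And>n. n \<ge> N \<Longrightarrow> cyc_prod e n $ k = G $ k"
      using lim unfolding tendsto_fps_iff eventually_sequentially by blast
    have "(cyc_prod e k :: 'a fps) $ k = cyc_prod e (max k N) $ k"
      by (rule cyc_prod_nth_stable[symmetric]) auto
    also have "\<dots> = G $ k" by (rule N) simp
    finally show "cyc_prod e k $ k = G $ k" .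
  qed
qed

lemma cyc_exponents_unique:
  fixes G :: "'a::field_char_0 fps"
  assumes "cyc_exponents e G" "cyc_exponents e' G" "e 0 = 0" "e' 0 = 0"
  shows "e = e'"
proof
  fix k
  show "e k = e' k"
  proof (induction k rule: less_induct)
    case (less k)
    show ?case
    proof (cases k)
      case (Suc n)
      have "(cyc_prod e n :: 'a fps) = cyc_prod e' n"
        using less Suc by (intro cyc_prod_cong) auto
      moreover have "(cyc_prod e (Suc n) :: 'a fps) $ Suc n = cyc_prod e' (Suc n) $ Suc n"
        using assms(1,2) unfolding cyc_exponents_def by metis
      ultimately have "(of_int (e k) :: 'a) = of_int (e' k)"
        using Suc by (simp add: cyc_prod_nth_Suc)
      then show ?thesis by simp
    qed (use assms in simp)
  qed
qed

definition fps_int_coeffs :: "'a::ring_1 fps \<Rightarrow> bool" where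
  "fps_int_coeffs f \<longleftrightarrow> (\<forall>i. f $ i \<in> \<int>)"

lemma fps_int_coeffs_one: "fps_int_coeffs 1"
  by (simp add: fps_int_coeffs_def fps_one_nth)

lemma fps_int_coeffs_mult: "fps_int_coeffs f \<Longrightarrow> fps_int_coeffs g \<Longrightarrow> fps_int_coeffs (f * g)"
  unfolding fps_int_coeffs_def fps_mult_nth by (auto intro!: Ints_sum Ints_mult)

lemma fps_int_coeffs_power: "fps_int_coeffs f \<Longrightarrow> fps_int_coeffs (f ^ n)"
  by (induction n) (simp_all add: fps_int_coeffs_one fps_int_coeffs_mult)

lemma fps_int_coeffs_inverse:
  assumes f0: "f $ 0 = (1::'a::field)" and f: "fps_int_coeffs f"
  shows "fps_int_coeffs (inverse f)"
  unfolding fps_int_coeffs_def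
proof
  fix n
  show "inverse f $ n \<in> \<int>"
  proof (induction n rule: less_induct)
    case (less n)
    show ?case
    proof (cases "n = 0")
      case False
      then show ?thesis
        using fps_inverse_nth_rec[OF f0, of n] less f
        by (auto simp: fps_int_coeffs_def intro!: Ints_sum Ints_mult Ints_minus)
    qed (use f0 in simp)
  qed
qed

lemma fps_int_coeffs_cyc_factor:
  assumes "j \<ge> 1"
  shows "fps_int_coeffs (cyc_factor j c :: 'a::field fps)"
proof -
  have "fps_int_coeffs (1 - fps_X ^ j :: 'a fps)" and "(1 - fps_X ^ j :: 'a fps) $ 0 = 1"
    using assms by (auto simp: fps_int_coeffs_def)
  then show ?thesis
    by (simp add: cyc_factor_def power_int_def fps_int_coeffs_power fps_int_coeffs_inverse)
qed

lemma fps_int_coeffs_cyc_prod: "fps_int_coeffs (cyc_prod e n :: 'a::field fps)"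
  by (induction n) (simp_all add: cyc_prod_Suc fps_int_coeffs_one fps_int_coeffs_mult fps_int_coeffs_cyc_factor)

text \<open>The exponent of index \<open>k + 1\<close> is forced by the coefficient of \<open>x^(k+1)\<close>: the factor
  \<open>(1 - x^(k+1))^c\<close> leaves all lower coefficients alone and subtracts \<open>c\<close> from that one.\<close>
primrec cyc_exponents_upto :: "rat fps \<Rightarrow> nat \<Rightarrow> nat \<Rightarrow> int" where
  "cyc_exponents_upto G 0 = (\<lambda>_. 0)"
| "cyc_exponents_upto G (Suc k) = (cyc_exponents_upto G k)
     (Suc k := \<lfloor>cyc_prod (cyc_exponents_upto G k) k $ Suc k - G $ Suc k\<rfloor>)"

lemma cyc_exponents_upto_stable:
  assumes "j \<le> k" and "k \<le> m"
  shows "cyc_exponents_upto G m j = cyc_exponents_upto G k j"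
  using assms(2) by (induction m rule: dec_induct) (use assms(1) in auto)

lemma cyc_exponents_exist:
  fixes G :: "rat fps"
  assumes G0: "G $ 0 = 1" and G: "fps_int_coeffs G"
  shows "\<exists>e. e 0 = 0 \<and> cyc_exponents e G"
proof (intro exI conjI)
  define e where "e k = cyc_exponents_upto G k k" for k
  show "e 0 = 0" by (simp add: e_def)
  have prefix: "cyc_prod e k = (cyc_prod (cyc_exponents_upto G k) k :: rat fps)" for k
    by (rule cyc_prod_cong) (unfold e_def, rule cyc_exponents_upto_stable[symmetric], auto)
  have "(cyc_prod e k :: rat fps) $ k = G $ k" for k
  proof (cases k)
    case (Suc n)
    define x where "x = cyc_prod (cyc_exponents_upto G n) n $ Suc n - G $ Suc n"
    have "x \<in> \<int>"
      using fps_int_coeffs_cyc_prod[of "cyc_exponents_upto G n" n, where 'a=rat] G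
      by (auto simp: x_def fps_int_coeffs_def intro: Ints_diff)
    then have x: "of_int \<lfloor>x\<rfloor> = x" by (auto elim: Ints_cases)
    have e_Suc: "e (Suc n) = \<lfloor>x\<rfloor>" by (simp add: e_def x_def)
    have "(cyc_prod e (Suc n) :: rat fps) $ Suc n = cyc_prod e n $ Suc n - of_int (e (Suc n))"
      by (rule cyc_prod_nth_Suc)
    also have "\<dots> = G $ Suc n"
      unfolding prefix e_Suc x by (simp add: x_def)
    finally show ?thesis using Suc by simp
  qed (simp add: G0)
  then show "cyc_exponents e G" by (simp add: cyc_exponents_def)
qed

lemma cyc_exponents_cyc_exp:
  assumes "0 \<in> S"
  shows "cyc_exponents (cyc_exp S) ((1 - fps_X) * sg_series S)"
proof -
  let ?P = "(1 - fps_X) * sg_series S"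
  have P_nth: "?P $ n = (if n \<in> S then 1 else 0) - (if n \<ge> 1 \<and> n - 1 \<in> S then 1 else 0)" for n
    by (cases n) (simp_all add: sg_series_def algebra_simps)
  have "fps_int_coeffs ?P"
    unfolding fps_int_coeffs_def P_nth by simp
  moreover have "?P $ 0 = 1" using assms by (simp add: sg_series_def)
  ultimately obtain e where "e 0 = 0" "cyc_exponents e ?P"
    using cyc_exponents_exist by blast
  then have "\<exists>!e. cyc_exponents e ?P \<and> e 0 = 0"
    using cyc_exponents_unique[of _ ?P] by blast
  then have "cyc_exponents (THE e. cyc_exponents e ?P \<and> e 0 = 0) ?P"
    by (rule theI'[THEN conjunct1])
  moreover have "cyc_exp S = (THE e. cyc_exponents e ?P \<and> e 0 = 0)"
    by (simp add: cyc_exp_def is_cyc_exp_seq_def cyc_exponents_iff_tendsto cyc_prod_def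
        cyc_factor_def)
  ultimately show ?thesis by simp
qed

lemma cyc_prod_shift_one_minus_X:
  assumes "n \<ge> 1"
  shows "cyc_prod e n = (1 - fps_X) * cyc_prod (\<lambda>j. e j - (if j = 1 then 1 else 0)) n"
  using assms
proof (induction n rule: dec_induct)
  case base
  show ?case using cyc_factor_eq_mult_pred[of 1 "e 1"] by (simp add: cyc_prod_Suc[of _ 0, simplified])
next
  case (step n)
  then show ?case by (simp add: cyc_prod_Suc mult.assoc)
qed

lemma cyc_exponents_divide_one_minus_X:
  fixes G :: "'a::field fps"
  assumes "cyc_exponents e ((1 - fps_X) * G)"
  shows "cyc_exponents (\<lambda>j. e j - (if j = 1 then 1 else 0)) G"
  unfolding cyc_exponents_def
proof
  let ?e = "\<lambda>j. e j - (if j = 1 then 1 else 0)"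
  fix k
  show "cyc_prod ?e k $ k = G $ k"
  proof (induction k)
    case 0
    show ?case using assms[unfolded cyc_exponents_def, rule_format, of 0] by simp
  next
    case (Suc k)
    have "G $ Suc k - G $ k = ((1 - fps_X) * G) $ Suc k"
      by (simp add: algebra_simps)
    also have "\<dots> = cyc_prod e (Suc k) $ Suc k"
      using assms by (simp add: cyc_exponents_def)
    also have "\<dots> = ((1 - fps_X) * cyc_prod ?e (Suc k)) $ Suc k"
      by (simp add: cyc_prod_shift_one_minus_X[of "Suc k" e])
    also have "\<dots> = cyc_prod ?e (Suc k) $ Suc k - cyc_prod ?e (Suc k) $ k"
      by (simp add: algebra_simps)
    also have "cyc_prod ?e (Suc k) $ k = G $ k"
      using Suc by (simp add: cyc_prod_nth_stable[of k k "Suc k"])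
    finally show ?case by simp
  qed
qed

section \<open>Series supported on a submonoid\<close>

definition add_submonoid :: "nat set \<Rightarrow> bool" where
  "add_submonoid M \<longleftrightarrow> 0 \<in> M \<and> (\<forall>a\<in>M. \<forall>b\<in>M. a + b \<in> M)"

lemma add_submonoid_add: "add_submonoid M \<Longrightarrow> a \<in> M \<Longrightarrow> b \<in> M \<Longrightarrow> a + b \<in> M"
  by (simp add: add_submonoid_def)

lemma add_submonoid_mult: "add_submonoid M \<Longrightarrow> a \<in> M \<Longrightarrow> r * a \<in> M"
  by (induction r) (auto simp: add_submonoid_def)

lemma add_submonoid_sum: "add_submonoid M \<Longrightarrow> (\<And>x. x \<in> A \<Longrightarrow> g x \<in> M) \<Longrightarrow> sum g A \<in> M"
  by (induction A rule: infinite_finite_induct) (simp_all add: add_submonoid_def)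

lemma add_submonoid_dvd: "add_submonoid {m. j dvd m}"
  by (auto simp: add_submonoid_def)

lemma sg_le_refl: "add_submonoid M \<Longrightarrow> sg_le M s s"
  by (simp add: sg_le_def add_submonoid_def)

lemma sg_le_trans:
  assumes M: "add_submonoid M" and "sg_le M i j" and "sg_le M j s"
  shows "sg_le M i s"
proof -
  have "(s - j) + (j - i) \<in> M"
    using assms unfolding sg_le_def add_submonoid_def by blast
  moreover have "(s - j) + (j - i) = s - i" and "i \<le> s"
    using assms(2,3) by (auto simp: sg_le_def)
  ultimately show ?thesis by (simp add: sg_le_def)
qed

definition fps_supp_in :: "nat set \<Rightarrow> 'a::zero fps \<Rightarrow> bool" where
  "fps_supp_in M f \<longleftrightarrow> (\<forall>i. i \<notin> M \<longrightarrow> f $ i = 0)"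

lemma fps_supp_in_one: "add_submonoid M \<Longrightarrow> fps_supp_in M 1"
  by (simp add: fps_supp_in_def add_submonoid_def fps_one_nth)

lemma fps_supp_in_mult:
  fixes f g :: "'a::comm_semiring_0 fps"
  assumes M: "add_submonoid M" and f: "fps_supp_in M f" and g: "fps_supp_in M g"
  shows "fps_supp_in M (f * g)"
  unfolding fps_supp_in_def
proof safe
  fix n assume n: "n \<notin> M"
  have "f $ i * g $ (n - i) = 0" if "i \<le> n" for i
  proof (cases "i \<in> M \<and> n - i \<in> M")
    case True
    then have "i + (n - i) \<in> M" using M by (simp add: add_submonoid_def)
    with n that show ?thesis by simp
  qed (use f g in \<open>auto simp: fps_supp_in_def\<close>)
  then show "(f * g) $ n = 0" by (simp add: fps_mult_nth)
qed

lemma fps_supp_in_power: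
  "add_submonoid M \<Longrightarrow> fps_supp_in M (f :: 'a::comm_semiring_1 fps) \<Longrightarrow> fps_supp_in M (f ^ n)"
  by (induction n) (simp_all add: fps_supp_in_one fps_supp_in_mult)

lemma fps_supp_in_prod:
  fixes f :: "'b \<Rightarrow> 'a::comm_semiring_1 fps"
  shows "add_submonoid M \<Longrightarrow> (\<And>x. x \<in> A \<Longrightarrow> fps_supp_in M (f x)) \<Longrightarrow>
    fps_supp_in M (\<Prod>x\<in>A. f x)"
  by (induction A rule: infinite_finite_induct) (simp_all add: fps_supp_in_one fps_supp_in_mult)

lemma fps_supp_in_inverse:
  assumes M: "add_submonoid M" and f0: "f $ 0 = (1::'a::field)" and f: "fps_supp_in M f"
  shows "fps_supp_in M (inverse f)"
  unfolding fps_supp_in_def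
proof (intro allI impI)
  fix n assume "n \<notin> M"
  then show "inverse f $ n = 0"
  proof (induction n rule: less_induct)
    case (less n)
    have "n > 0" using less.prems M by (auto simp: add_submonoid_def intro: gr0I)
    have "inverse f $ j * f $ (n - j) = 0" if "j < n" for j
    proof (cases "j \<in> M")
      case True
      have "n - j \<notin> M"
      proof
        assume "n - j \<in> M"
        with True M have "j + (n - j) \<in> M" by (simp add: add_submonoid_def)
        with less.prems that show False by simp
      qed
      with f show ?thesis by (simp add: fps_supp_in_def)
    qed (use less that in simp)
    then have "(\<Sum>j<n. inverse f $ j * f $ (n - j)) = 0"
      by (intro sum.neutral) simp
    then show ?case by (simp add: fps_inverse_nth_rec[OF f0 \<open>n > 0\<close>])
  qed
qed

lemma fps_supp_in_cyc_factor:
  assumes M: "add_submonoid M" and j: "j \<in> M" "j \<ge> 1"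
  shows "fps_supp_in M (cyc_factor j c :: 'a::field fps)"
proof -
  have "fps_supp_in M (1 - fps_X ^ j :: 'a fps)" and "(1 - fps_X ^ j :: 'a fps) $ 0 = 1"
    using M j by (auto simp: fps_supp_in_def add_submonoid_def)
  with M show ?thesis
    by (simp add: cyc_factor_def power_int_def fps_supp_in_power fps_supp_in_inverse)
qed

lemma fps_supp_in_cyc_prod:
  assumes M: "add_submonoid M" and e: "\<And>j. 1 \<le> j \<Longrightarrow> j \<le> n \<Longrightarrow> j \<notin> M \<Longrightarrow> e j = 0"
  shows "fps_supp_in M (cyc_prod e n :: 'a::field fps)"
  unfolding cyc_prod_def
proof (rule fps_supp_in_prod[OF M])
  fix j assume j: "j \<in> {1..n}"
  show "fps_supp_in M (cyc_factor j (e j) :: 'a fps)"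
    by (cases "j \<in> M") (use M j e in \<open>simp_all add: fps_supp_in_cyc_factor fps_supp_in_one\<close>)
qed

lemma cyc_exponents_vanish:
  fixes G :: "'a::field_char_0 fps"
  assumes M: "add_submonoid M" and G: "fps_supp_in M G" and e: "cyc_exponents e G"
    and k: "1 \<le> k" "k \<notin> M"
  shows "e k = 0"
  using k
proof (induction k rule: less_induct)
  case (less k)
  then obtain n where n: "k = Suc n" by (cases k) auto
  have "fps_supp_in M (cyc_prod e n :: 'a fps)"
    using less n by (intro fps_supp_in_cyc_prod[OF M]) auto
  then have "(cyc_prod e n :: 'a fps) $ k = 0"
    using less.prems by (simp add: fps_supp_in_def)
  moreover have "(cyc_prod e k :: 'a fps) $ k = 0"
    using e G less.prems by (simp add: cyc_exponents_def fps_supp_in_def)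
  ultimately show ?case
    using cyc_prod_nth_Suc[of e n, where 'a='a] n by simp
qed

definition fps_eq_on :: "nat set \<Rightarrow> 'a fps \<Rightarrow> 'a fps \<Rightarrow> bool" where
  "fps_eq_on L f g \<longleftrightarrow> (\<forall>n\<in>L. f $ n = g $ n)"

lemma fps_eq_on_trans: "fps_eq_on L f g \<Longrightarrow> fps_eq_on L g h \<Longrightarrow> fps_eq_on L f h"
  by (simp add: fps_eq_on_def)

lemma fps_eq_on_mult_right:
  assumes M: "add_submonoid M" and fg: "fps_eq_on {j. sg_le M j s} f g"
    and h: "fps_supp_in M (h :: 'a::comm_ring fps)"
  shows "fps_eq_on {j. sg_le M j s} (f * h) (g * h)"
  unfolding fps_eq_on_def
proof
  fix n assume n: "n \<in> {j. sg_le M j s}"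
  have "f $ i * h $ (n - i) = g $ i * h $ (n - i)" if "i \<le> n" for i
  proof (cases "n - i \<in> M")
    case True
    with that have "sg_le M i n" by (simp add: sg_le_def)
    with n have "sg_le M i s" by (simp add: sg_le_trans[OF M])
    with fg show ?thesis by (simp add: fps_eq_on_def)
  qed (use h in \<open>simp add: fps_supp_in_def\<close>)
  then show "(f * h) $ n = (g * h) $ n"
    by (simp add: fps_mult_nth)
qed

lemma cyc_factor_eq_on_one:
  assumes M: "add_submonoid M" and j: "j \<in> M" "j \<ge> 1" "\<not> sg_le M j s"
  shows "fps_eq_on {i. sg_le M i s} (cyc_factor j c :: 'a::field fps) 1"
  unfolding fps_eq_on_def
proof
  fix n assume n: "n \<in> {i. sg_le M i s}"
  show "(cyc_factor j c :: 'a fps) $ n = 1 $ n"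
  proof (cases "j dvd n \<and> n > 0")
    case True
    then obtain k where k: "n = k * j" "k > 0"
      by (auto elim!: dvdE simp: mult.commute)
    then obtain r where "n = Suc r * j"
      by (cases k) auto
    then have "sg_le M j n"
      using add_submonoid_mult[OF M j(1), of r] by (simp add: sg_le_def)
    with n j(3) sg_le_trans[OF M] show ?thesis by blast
  next
    case False
    have "fps_supp_in {m. j dvd m} (cyc_factor j c :: 'a fps)"
      using j by (intro fps_supp_in_cyc_factor add_submonoid_dvd) auto
    with False j(2) show ?thesis
      by (cases "n = 0") (auto simp: fps_supp_in_def cyc_factor_nth_0)
  qed
qed

lemma cyc_prod_eq_on_restrict:
  assumes M: "add_submonoid M" and e: "\<And>j. 1 \<le> j \<Longrightarrow> j \<notin> M \<Longrightarrow> e j = 0"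
  shows "fps_eq_on {j. sg_le M j s} (cyc_prod e n :: 'a::field fps)
           (cyc_prod (\<lambda>j. if sg_le M j s then e j else 0) n)"
proof (induction n)
  case 0
  show ?case by (simp add: fps_eq_on_def)
next
  case (Suc n)
  let ?L = "{j. sg_le M j s}" and ?F = "cyc_factor (Suc n) (e (Suc n)) :: 'a fps"
  have F: "fps_supp_in M ?F"
    by (cases "Suc n \<in> M") (simp_all add: M e fps_supp_in_cyc_factor fps_supp_in_one)
  show ?case
  proof (cases "sg_le M (Suc n) s")
    case True
    with fps_eq_on_mult_right[OF M Suc F] show ?thesis by (simp add: cyc_prod_Suc)
  next
    case False
    have "fps_eq_on ?L (cyc_prod e n * ?F) (cyc_prod e n)"
    proof (cases "e (Suc n) = 0")
      case True
      then show ?thesis by (simp add: fps_eq_on_def)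
    next
      case nonzero: False
      then have "Suc n \<in> M" using e by force
      then have "fps_eq_on ?L ?F 1"
        using False by (intro cyc_factor_eq_on_one[OF M]) auto
      moreover have "fps_supp_in M (cyc_prod e n :: 'a fps)"
        using e by (intro fps_supp_in_cyc_prod[OF M]) auto
      ultimately show ?thesis
        using fps_eq_on_mult_right[OF M] by (fastforce simp: mult.commute)
    qed
    from fps_eq_on_trans[OF this Suc] False show ?thesis by (simp add: cyc_prod_Suc)
  qed
qed

lemma min_gens_subset: "min_gens M \<subseteq> M"
  by (auto simp: min_gens_def)

lemma zero_notin_min_gens: "0 \<notin> min_gens M"
  by (simp add: min_gens_def)

lemma min_gens_sg_le:
  assumes "a \<in> min_gens M" "j \<in> M" "sg_le M j a"
  shows "j = 0 \<or> j = a"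
proof -
  have "a = j + (a - j)" "a - j \<in> M" using assms(3) by (auto simp: sg_le_def)
  with assms(1,2) have "j = 0 \<or> a - j = 0" unfolding min_gens_def by blast
  with assms(3) show ?thesis by (auto simp: sg_le_def)
qed

lemma cyc_exponents_min_gens:
  fixes G :: "'a::field_char_0 fps"
  assumes M: "add_submonoid M" and G: "fps_supp_in M G" and e: "cyc_exponents e G"
    and a: "a \<in> min_gens M"
  shows "G $ a = - of_int (e a)"
proof -
  let ?L = "{j. sg_le M j a}"
  let ?e = "\<lambda>j. if sg_le M j a then e j else 0"
  have vanish: "\<And>j. 1 \<le> j \<Longrightarrow> j \<notin> M \<Longrightarrow> e j = 0"
    using cyc_exponents_vanish[OF M G e] by blast
  have a1: "a \<ge> 1" using a by (auto simp: min_gens_def)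
  have "?e j = 0" if "1 \<le> j" "j \<le> a" "j \<noteq> a" for j
    using min_gens_sg_le[OF a, of j] vanish[of j] that by auto
  then have "cyc_prod ?e a = (\<Prod>j\<in>{a}. cyc_factor j (?e j) :: 'a fps)"
    using a1 by (intro cyc_prod_eq_prod) auto
  then have "(cyc_prod ?e a :: 'a fps) $ a = - of_int (e a)"
    using a1 sg_le_refl[OF M] by (simp add: cyc_factor_nth_self)
  moreover have "(cyc_prod e a :: 'a fps) $ a = G $ a"
    using e by (simp add: cyc_exponents_def)
  moreover have "fps_eq_on {j. sg_le M j a} (cyc_prod e a :: 'a fps) (cyc_prod ?e a)"
    using vanish by (rule cyc_prod_eq_on_restrict[OF M])
  then have "(cyc_prod e a :: 'a fps) $ a = cyc_prod ?e a $ a"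
    using sg_le_refl[OF M] by (simp add: fps_eq_on_def)
  ultimately show ?thesis by simp
qed

section \<open>Factorizations\<close>

definition factorizations_over :: "nat set \<Rightarrow> nat \<Rightarrow> (nat \<Rightarrow> nat) set" where
  "factorizations_over B n = {f. (\<forall>a. a \<notin> B \<longrightarrow> f a = 0) \<and> (\<Sum>a\<in>B. f a * a) = n}"

lemma factorizations_over_empty: "factorizations_over {} n = (if n = 0 then {\<lambda>_. 0} else {})"
  by (auto simp: factorizations_over_def)

lemma factorizations_over_insert:
  assumes B: "finite B" and b: "b \<notin> B"
  shows "factorizations_over (insert b B) n =
    (\<lambda>(r, g). g(b := r)) ` (SIGMA r:{r. r * b \<le> n}. factorizations_over B (n - r * b))"
proof (intro equalityI subsetI)
  fix f assume f: "f \<in> factorizations_over (insert b B) n"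
  define g where "g = f(b := 0)"
  have "(\<Sum>a\<in>B. g a * a) = (\<Sum>a\<in>B. f a * a)"
    using b by (intro sum.cong) (auto simp: g_def)
  moreover have n: "n = f b * b + (\<Sum>a\<in>B. f a * a)"
    using f B b by (simp add: factorizations_over_def)
  ultimately have "g \<in> factorizations_over B (n - f b * b)"
    using f by (auto simp: factorizations_over_def g_def)
  moreover have "f = g(b := f b)" by (simp add: g_def)
  ultimately show "f \<in> (\<lambda>(r, g). g(b := r)) ` (SIGMA r:{r. r * b \<le> n}. factorizations_over B (n - r * b))"
    using n by (intro rev_image_eqI[of "(f b, g)"]) auto
next
  fix f assume "f \<in> (\<lambda>(r, g). g(b := r)) ` (SIGMA r:{r. r * b \<le> n}. factorizations_over B (n - r * b))"
  then obtain r g where f: "f = g(b := r)" and r: "r * b \<le> n"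
    and g: "g \<in> factorizations_over B (n - r * b)" by auto
  have "(\<Sum>a\<in>B. f a * a) = (\<Sum>a\<in>B. g a * a)"
    using b by (intro sum.cong) (auto simp: f)
  then have "(\<Sum>a\<in>insert b B. f a * a) = n"
    using B b g r by (simp add: f factorizations_over_def)
  with g show "f \<in> factorizations_over (insert b B) n"
    by (auto simp: factorizations_over_def f)
qed

lemma inj_on_factorizations_over_insert:
  assumes b: "b \<notin> B"
  shows "inj_on (\<lambda>(r, g). g(b := r)) (SIGMA r:R. factorizations_over B (m r))"
proof (rule inj_onI, clarify)
  fix r g r' g'
  assume g: "g \<in> factorizations_over B (m r)" and g': "g' \<in> factorizations_over B (m r')"
    and eq: "g(b := r) = g'(b := r')"
  have "g b = g' b" using g g' b by (simp add: factorizations_over_def)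
  with eq show "r = r' \<and> g = g'"
    by (metis fun_upd_eqD fun_upd_triv fun_upd_upd)
qed

lemma finite_mult_le: "b \<ge> 1 \<Longrightarrow> finite {r :: nat. r * b \<le> n}"
proof -
  assume b: "b \<ge> 1"
  then have "{r. r * b \<le> n} \<subseteq> {..n}"
    using le_trans[OF mult_le_mono2[OF b, unfolded mult_1_right]] by auto
  then show ?thesis
    by (rule finite_subset) simp
qed

lemma finite_factorizations_over:
  assumes "finite B" and "0 \<notin> B"
  shows "finite (factorizations_over B n)"
  using assms
proof (induction B arbitrary: n rule: finite_induct)
  case (insert b B)
  then have "b \<ge> 1" by (cases b) auto
  with insert show ?case
    by (simp add: factorizations_over_insert finite_mult_le)
qed (simp add: factorizations_over_empty)

lemma card_factorizations_over_insert:
  assumes "finite B" "0 \<notin> B" "b \<notin> B" "b \<ge> 1"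
  shows "card (factorizations_over (insert b B) n) =
    (\<Sum>r | r * b \<le> n. card (factorizations_over B (n - r * b)))"
  using assms
  by (simp add: factorizations_over_insert card_image inj_on_factorizations_over_insert
      card_SigmaI finite_mult_le finite_factorizations_over)

lemma inverse_one_minus_X_power:
  assumes "a \<ge> 1"
  shows "inverse (1 - fps_X ^ a :: 'a::field fps) = Abs_fps (\<lambda>i. if a dvd i then 1 else 0)"
proof (rule fps_inverse_unique, rule fps_ext)
  fix n
  have "a dvd n - a \<longleftrightarrow> a dvd n" if "n \<ge> a"
    using that by (simp add: dvd_diff_nat dvd_minus_self)
  moreover have "\<not> a dvd n" if "0 < n" "n < a"
    using that by (auto dest: dvd_imp_le)
  ultimately show "((1 - fps_X ^ a) * Abs_fps (\<lambda>i. if a dvd i then 1 else 0)) $ n = (1 :: 'a fps) $ n"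
    using assms by (auto simp: algebra_simps fps_X_power_mult_nth)
qed

lemma mult_inverse_one_minus_X_power_nth:
  assumes b: "b \<ge> 1"
  shows "(f * inverse (1 - fps_X ^ b :: 'a::field fps)) $ n = (\<Sum>r | r * b \<le> n. f $ (n - r * b))"
proof -
  have bij: "bij_betw (\<lambda>r. n - r * b) {r. r * b \<le> n} {i\<in>{0..n}. b dvd (n - i)}"
  proof (rule bij_betw_byWitness[of _ "\<lambda>i. (n - i) div b"])
    show "\<forall>r\<in>{r. r * b \<le> n}. (n - (n - r * b)) div b = r" using b by auto
    show "\<forall>i\<in>{i\<in>{0..n}. b dvd (n - i)}. n - (n - i) div b * b = i" by auto
    show "(\<lambda>r. n - r * b) ` {r. r * b \<le> n} \<subseteq> {i\<in>{0..n}. b dvd (n - i)}" by auto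
    show "(\<lambda>i. (n - i) div b) ` {i\<in>{0..n}. b dvd (n - i)} \<subseteq> {r. r * b \<le> n}"
      by (auto elim!: dvdE simp: mult.commute[of _ b])
  qed
  have "(f * inverse (1 - fps_X ^ b :: 'a fps)) $ n = (\<Sum>i=0..n. if b dvd (n - i) then f $ i else 0)"
    unfolding inverse_one_minus_X_power[OF b] fps_mult_nth by (rule sum.cong) auto
  also have "\<dots> = (\<Sum>i\<in>{i\<in>{0..n}. b dvd (n - i)}. f $ i)"
    by (rule sum.inter_filter[symmetric]) simp
  also have "\<dots> = (\<Sum>r | r * b \<le> n. f $ (n - r * b))"
    using sum.reindex_bij_betw[OF bij, of "\<lambda>i. f $ i"] by simp
  finally show ?thesis .
qed

lemma prod_inverse_one_minus_X_power_nth: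
  assumes "finite B" and "0 \<notin> B"
  shows "(\<Prod>a\<in>B. inverse (1 - fps_X ^ a) :: 'a::field fps) $ n = of_nat (card (factorizations_over B n))"
  using assms
proof (induction B arbitrary: n rule: finite_induct)
  case (insert b B)
  let ?D = "\<Prod>a\<in>B. inverse (1 - fps_X ^ a) :: 'a fps"
  have b: "b \<ge> 1" using insert.prems by (cases b) auto
  have "(\<Prod>a\<in>insert b B. inverse (1 - fps_X ^ a) :: 'a fps) $ n
      = (?D * inverse (1 - fps_X ^ b)) $ n"
    using insert.hyps by (simp add: mult.commute)
  also have "\<dots> = (\<Sum>r | r * b \<le> n. ?D $ (n - r * b))"
    by (rule mult_inverse_one_minus_X_power_nth[OF b])
  also have "\<dots> = of_nat (card (factorizations_over (insert b B) n))"
    using insert b by (simp add: card_factorizations_over_insert finite_mult_le)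
  finally show ?case .
qed (simp add: factorizations_over_empty)

lemma factorizations_over_restrict:
  assumes M: "add_submonoid M" and B: "finite B" "B \<subseteq> M"
  shows "factorizations_over B s = factorizations_over (B \<inter> {j. sg_le M j s}) s"
proof (intro equalityI subsetI)
  fix f assume f: "f \<in> factorizations_over B s"
  have "sg_le M a s" if a: "a \<in> B" "f a \<noteq> 0" for a
  proof -
    obtain r where r: "f a = Suc r" using a(2) by (cases "f a") auto
    have "s = a + (r * a + (\<Sum>c\<in>B - {a}. f c * c))"
      using f sum.remove[OF B(1) a(1), of "\<lambda>c. f c * c"] r by (simp add: factorizations_over_def)
    moreover have "(\<Sum>c\<in>B - {a}. f c * c) \<in> M"
      using B add_submonoid_mult[OF M] by (intro add_submonoid_sum[OF M]) auto
    then have "r * a + (\<Sum>c\<in>B - {a}. f c * c) \<in> M"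
      using a B add_submonoid_mult[OF M] by (intro add_submonoid_add[OF M]) auto
    ultimately show ?thesis by (simp add: sg_le_def)
  qed
  with f have zero: "\<forall>a. a \<notin> B \<inter> {j. sg_le M j s} \<longrightarrow> f a = 0"
    by (auto simp: factorizations_over_def)
  moreover have "(\<Sum>a\<in>B \<inter> {j. sg_le M j s}. f a * a) = (\<Sum>a\<in>B. f a * a)"
    using zero by (intro sum.mono_neutral_left B) auto
  ultimately show "f \<in> factorizations_over (B \<inter> {j. sg_le M j s}) s"
    using f by (simp add: factorizations_over_def)
next
  fix f assume f: "f \<in> factorizations_over (B \<inter> {j. sg_le M j s}) s"
  then have "(\<Sum>a\<in>B. f a * a) = (\<Sum>a\<in>B \<inter> {j. sg_le M j s}. f a * a)"
    by (intro sum.mono_neutral_right B) (auto simp: factorizations_over_def)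
  with f show "f \<in> factorizations_over B s"
    by (auto simp: factorizations_over_def)
qed

lemma cyc_exponents_nth_eq_card_factorizations:
  fixes G :: "'a::field_char_0 fps"
  assumes M: "add_submonoid M" and G: "fps_supp_in M G" and e: "cyc_exponents e G"
    and B: "finite B" "B \<subseteq> M" "0 \<notin> B"
    and e_below: "\<And>j. 1 \<le> j \<Longrightarrow> sg_le M j s \<Longrightarrow> e j = (if j \<in> B then -1 else 0)"
  shows "G $ s = of_nat (card (factorizations_over B s))"
proof -
  let ?L = "{j. sg_le M j s}"
  let ?e = "\<lambda>j. if sg_le M j s then e j else 0"
  have vanish: "\<And>j. 1 \<le> j \<Longrightarrow> j \<notin> M \<Longrightarrow> e j = 0"
    using cyc_exponents_vanish[OF M G e] by blast
  have B1: "j \<ge> 1" if "j \<in> B" for j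
    using B(3) that by (cases j) auto
  have "B \<inter> ?L \<subseteq> {1..s}"
    using B1 by (auto simp: sg_le_def)
  then have "cyc_prod ?e s = (\<Prod>j\<in>B \<inter> ?L. cyc_factor j (?e j) :: 'a fps)"
    using e_below by (intro cyc_prod_eq_prod) auto
  also have "\<dots> = (\<Prod>j\<in>B \<inter> ?L. inverse (1 - fps_X ^ j))"
    using e_below B1 by (intro prod.cong) (auto simp: cyc_factor_minus_1)
  finally have restricted: "cyc_prod ?e s $ s = (of_nat (card (factorizations_over (B \<inter> ?L) s)) :: 'a)"
    using B by (simp add: prod_inverse_one_minus_X_power_nth)
  have "fps_eq_on ?L (cyc_prod e s :: 'a fps) (cyc_prod ?e s)"
    using vanish by (rule cyc_prod_eq_on_restrict[OF M])
  then have "(cyc_prod e s :: 'a fps) $ s = cyc_prod ?e s $ s"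
    using sg_le_refl[OF M] unfolding fps_eq_on_def by blast
  moreover have "G $ s = cyc_prod e s $ s"
    using e by (simp add: cyc_exponents_def)
  ultimately show ?thesis
    using restricted factorizations_over_restrict[OF M B(1,2)] by simp
qed

section \<open>Numerical semigroups\<close>

lemma add_submonoid_numerical_semigroup: "numerical_semigroup S \<Longrightarrow> add_submonoid S"
  by (simp add: numerical_semigroup_def add_submonoid_def)

lemma finite_min_gens:
  assumes "numerical_semigroup S"
  shows "finite (min_gens S)"
proof -
  have "finite (UNIV - S)"
    using assms by (simp add: numerical_semigroup_def)
  then obtain F where F: "\<forall>n\<in>UNIV - S. n \<le> F"
    unfolding finite_nat_set_iff_bounded_le by blast
  have large: "n \<in> S" if "n > F" for n
  proof (rule ccontr)
    assume "n \<notin> S"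
    with F have "n \<le> F" by simp
    with that show False by simp
  qed
  have "a \<le> 2 * F + 1" if a: "a \<in> min_gens S" for a
  proof (rule ccontr)
    assume big: "\<not> a \<le> 2 * F + 1"
    then have "F + 1 \<in> S" and "sg_le S (F + 1) a"
      by (simp_all add: large sg_le_def)
    with big show False
      using min_gens_sg_le[OF a] by fastforce
  qed
  then have "min_gens S \<subseteq> {..2 * F + 1}"
    by auto
  then show ?thesis
    by (rule finite_subset) simp
qed

lemma fps_supp_in_sg_series: "fps_supp_in S (sg_series S)"
  by (simp add: fps_supp_in_def sg_series_def)

text \<open>Exponents of \<open>H\<^sub>S\<close> itself rather than of \<open>(1 - x) H\<^sub>S\<close>.\<close>
definition sg_exp :: "nat set \<Rightarrow> nat \<Rightarrow> int" where
  "sg_exp S j = cyc_exp S j - (if j = 1 then 1 else 0)"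

lemma cyc_exponents_sg_exp: "0 \<in> S \<Longrightarrow> cyc_exponents (sg_exp S) (sg_series S)"
  unfolding sg_exp_def by (rule cyc_exponents_divide_one_minus_X[OF cyc_exponents_cyc_exp])

lemma sg_exp_below_if_no_cycE:
  assumes S: "numerical_semigroup S" and none: "\<not> (\<exists>d\<in>cycE S. sg_le S d s)"
    and j: "1 \<le> j" "sg_le S j s"
  shows "sg_exp S j = (if j \<in> min_gens S then -1 else 0)"
proof -
  have M: "add_submonoid S" and exps: "cyc_exponents (sg_exp S) (sg_series S)"
    using S by (simp_all add: add_submonoid_numerical_semigroup cyc_exponents_sg_exp
        numerical_semigroup_def)
  show ?thesis
  proof (cases "j \<in> min_gens S")
    case True
    then have "sg_series S $ j = - of_int (sg_exp S j)"
      by (rule cyc_exponents_min_gens[OF M fps_supp_in_sg_series exps])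
    moreover have "sg_series S $ j = 1"
      using True by (simp add: sg_series_def min_gens_def)
    ultimately show ?thesis using True by simp
  next
    case not_gen: False
    show ?thesis
    proof (cases "j = 1")
      case True
      then have "j \<notin> S" using not_gen by (auto simp: min_gens_def)
      with j(1) show ?thesis
        using cyc_exponents_vanish[OF M fps_supp_in_sg_series exps] not_gen by simp
    next
      case False
      with j(1) have "j \<ge> 2" by simp
      moreover have "j \<notin> cycE S" using none j(2) by blast
      ultimately have "cyc_exp S j = 0"
        using not_gen by (simp add: cycE_def)
      with False not_gen show ?thesis by (simp add: sg_exp_def)
    qed
  qed
qed

theorem proposition5p2:
  fixes S :: "nat set" and s :: nat
  assumes "numerical_semigroup S" and "s \<in> S" and "nfact S s \<ge> 2"
  shows "\<exists>d\<in>cycE S. sg_le S d s"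
proof (rule ccontr)
  assume none: "\<not> (\<exists>d\<in>cycE S. sg_le S d s)"
  have M: "add_submonoid S"
    using assms(1) by (rule add_submonoid_numerical_semigroup)
  have "sg_series S $ s = (of_nat (card (factorizations_over (min_gens S) s)) :: rat)"
  proof (rule cyc_exponents_nth_eq_card_factorizations[OF M fps_supp_in_sg_series])
    show "cyc_exponents (sg_exp S) (sg_series S)"
      using assms(1) by (simp add: cyc_exponents_sg_exp numerical_semigroup_def)
    show "finite (min_gens S)" using assms(1) by (rule finite_min_gens)
  qed (simp_all add: min_gens_subset zero_notin_min_gens sg_exp_below_if_no_cycE[OF assms(1) none])
  then have "nfact S s = 1"
    using assms(2) by (simp add: nfact_def factorizations_def factorizations_over_def sg_series_def)
  with assms(3) show False by simp
qed

end
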